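(* Let $n\geq 2$. Let $H$ be the $n!\times(n-1)^2$ $0/1$ matrix with rows indexed by $S(n)$, columns indexed by ordered pairs $(i,j)$ with $i,j\in\{1,\dots,n-1\}$, and $(\pi,(i,j))$-entry equal to $1$ iff $\pi(i)=j$. Let $N$ be the submatrix of $H$ formed by the rows indexed by derangements of $\{1,\dots,n\}$, and let $W$ be the submatrix of $H$ formed by the columns indexed by the pairs $(i,i)$, $i\in\{1,\dots,n-1\}$. If $y\in\mathbb{R}^{(n-1)^2}$ satisfies $Ny=0$, then $Hy$ lies in the column space of $W$.
   Context: A derangement of $\{1,\dots,n\}$ is a permutation with no fixed points; $S(n)$ is the symmetric group on $\{1,\dots,n\}$. *)

theory Defs
  imports Complex_Main "HOL-Combinatorics.Permutations"
begin

definition derangement :: "nat \<Rightarrow> (nat \<Rightarrow> nat) \<Rightarrow> bool" where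
  "derangement n \<pi> \<longleftrightarrow> \<pi> permutes {1..n} \<and> (\<forall>i\<in>{1..n}. \<pi> i \<noteq> i)"

definition cols :: "nat \<Rightarrow> (nat \<times> nat) set" where
  "cols n = {1..n-1} \<times> {1..n-1}"

definition Hmat :: "(nat \<Rightarrow> nat) \<Rightarrow> nat \<times> nat \<Rightarrow> real" where
  "Hmat \<pi> p = (if \<pi> (fst p) = snd p then 1 else 0)"

definition Hmul :: "nat \<Rightarrow> (nat \<times> nat \<Rightarrow> real) \<Rightarrow> (nat \<Rightarrow> nat) \<Rightarrow> real" where
  "Hmul n y \<pi> = (\<Sum>p\<in>cols n. Hmat \<pi> p * y p)"

end

theory Submission
  imports Defs
begin

(*
  If y is orthogonal (via N) to every derangement row, then every off-diagonal
  entry y(a,b), a \<noteq> b, vanishes; consequently H y = W c with c i = y(i,i),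
  since the row of H indexed by \<pi> then only picks up the entries y(i,i)
  with \<pi> i = i.

  The vanishing of the off-diagonal entries is proved in two steps.
  (1) For n \<ge> 3, y(1,2) = 0: compare the long cycle 1 \<rightarrow> 2 \<rightarrow> \<dots> \<rightarrow> n \<rightarrow> 1
      with the "detour" cycles that visit n right after k (1 \<le> k \<le> n-2).
      All are derangements, so their rows of H y vanish; their difference
      gives y(k,k+1) = y(n-1,1) for every k, and the long cycle itself gives
      (n-2) y(n-1,1) = 0.
  (2) The hypothesis is invariant under relabelling {1..n-1} by any
      permutation g (conjugating a derangement by g gives a derangement), so
      choosing g with g 1 = a and g 2 = b transports (1) to y(a,b) = 0.
*)

lemma permutes_of_inj_on:
  assumes "finite A" "\<And>x. x \<notin> A \<Longrightarrow> p x = x" "p ` A \<subseteq> A" "inj_on p A"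
  shows "p permutes A"
proof (rule bij_imp_permutes)
  have "p ` A = A" using endo_inj_surj[OF assms(1,3,4)] .
  then show "bij_betw p A A" using assms(4) by (simp add: bij_betw_def)
qed (use assms in auto)

lemma Hmul_as_row_sum:
  "Hmul n y \<pi> = (\<Sum>i\<in>{1..n-1}. if \<pi> i \<in> {1..n-1} then y (i, \<pi> i) else 0)"
proof -
  have "Hmul n y \<pi> = (\<Sum>i\<in>{1..n-1}. \<Sum>j\<in>{1..n-1}. Hmat \<pi> (i,j) * y (i,j))"
    unfolding Hmul_def cols_def by (simp add: sum.cartesian_product)
  also have "\<dots> = (\<Sum>i\<in>{1..n-1}. \<Sum>j\<in>{1..n-1}. if \<pi> i = j then y (i, \<pi> i) else 0)"
    by (intro sum.cong refl) (auto simp: Hmat_def)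
  finally show ?thesis by (simp add: sum.delta)
qed

definition long_cycle :: "nat \<Rightarrow> nat \<Rightarrow> nat" where
  "long_cycle n x = (if 1 \<le> x \<and> x < n then x + 1 else if x = n then 1 else x)"

text \<open>The cycle 1 \<rightarrow> \<dots> \<rightarrow> k \<rightarrow> n \<rightarrow> k+1 \<rightarrow> \<dots> \<rightarrow> n-1 \<rightarrow> 1, which inserts n after k.\<close>
definition detour_cycle :: "nat \<Rightarrow> nat \<Rightarrow> nat \<Rightarrow> nat" where
  "detour_cycle n k x = (if x = k then n else if x = n then k + 1 else if x = n - 1 then 1
      else if 1 \<le> x \<and> x < n then x + 1 else x)"

lemma long_cycle_derangement:
  assumes "n \<ge> 2"
  shows "derangement n (long_cycle n)"
  unfolding derangement_def
proof
  show "long_cycle n permutes {1..n}"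
    by (rule permutes_of_inj_on)
       (use assms in \<open>auto simp: long_cycle_def inj_on_def split: if_splits\<close>)
qed (use assms in \<open>auto simp: long_cycle_def\<close>)

lemma detour_cycle_derangement:
  assumes "n \<ge> 3" "k \<in> {1..n-2}"
  shows "derangement n (detour_cycle n k)"
  unfolding derangement_def
proof
  show "detour_cycle n k permutes {1..n}"
    by (rule permutes_of_inj_on)
       (use assms in \<open>auto simp: detour_cycle_def inj_on_def split: if_splits\<close>)
qed (use assms in \<open>auto simp: detour_cycle_def\<close>)

lemma Hmul_long_cycle:
  assumes "n \<ge> 2"
  shows "Hmul n y (long_cycle n) = (\<Sum>i\<in>{1..n-2}. y (i, i + 1))"
proof -
  have split: "{1..n-1} = insert (n-1) {1..n-2}" "n - 1 \<notin> {1..n-2}" using assms by auto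
  have "Hmul n y (long_cycle n) = (\<Sum>i\<in>{1..n-1}. if i = n-1 then 0 else y (i, i + 1))"
    unfolding Hmul_as_row_sum by (intro sum.cong refl) (auto simp: long_cycle_def)
  also have "\<dots> = (\<Sum>i\<in>{1..n-2}. if i = n-1 then 0 else y (i, i + 1))"
    unfolding split(1) using split(2) by simp
  also have "\<dots> = (\<Sum>i\<in>{1..n-2}. y (i, i + 1))"
    by (intro sum.cong refl) (use assms in auto)
  finally show ?thesis .
qed

lemma Hmul_detour_cycle:
  assumes "n \<ge> 3" "k \<in> {1..n-2}"
  shows "Hmul n y (detour_cycle n k) + y (k, k + 1) = Hmul n y (long_cycle n) + y (n - 1, 1)"
proof -
  define A where "A = {1..n-1}"
  have kA: "k \<in> A" and nA: "n - 1 \<in> A" using assms by (auto simp: A_def)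
  have "Hmul n y (detour_cycle n k) + y (k, k + 1)
      = (\<Sum>i\<in>A. if i = k then 0 else if i = n-1 then y (n-1, 1) else y (i, i + 1))
        + (\<Sum>i\<in>A. if i = k then y (k, k + 1) else 0)"
    unfolding Hmul_as_row_sum A_def using kA
    by (intro arg_cong2[where f = "(+)"] sum.cong refl)
       (use assms in \<open>auto simp: detour_cycle_def A_def\<close>)
  also have "\<dots> = (\<Sum>i\<in>A. if i = n-1 then 0 else y (i, i + 1))
        + (\<Sum>i\<in>A. if i = n-1 then y (n - 1, 1) else 0)"
    unfolding sum.distrib[symmetric] by (intro sum.cong refl) (use assms in auto)
  also have "\<dots> = Hmul n y (long_cycle n) + y (n - 1, 1)"
    unfolding Hmul_as_row_sum A_def using nA
    by (intro arg_cong2[where f = "(+)"] sum.cong refl)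
       (auto simp: long_cycle_def A_def)
  finally show ?thesis .
qed

lemma derangement_kernel_entry_1_2:
  fixes y :: "nat \<times> nat \<Rightarrow> real"
  assumes n: "n \<ge> 3"
    and hyp: "\<forall>\<pi>. derangement n \<pi> \<longrightarrow> Hmul n y \<pi> = 0"
  shows "y (1, 2) = 0"
proof -
  have long: "Hmul n y (long_cycle n) = 0"
    using hyp long_cycle_derangement n by simp
  have superdiag: "y (k, k + 1) = y (n - 1, 1)" if "k \<in> {1..n-2}" for k
    using Hmul_detour_cycle[OF n that, of y] long
      hyp detour_cycle_derangement[OF n that] by simp
  have "0 = (\<Sum>i\<in>{1..n-2}. y (i, i + 1))"
    using long Hmul_long_cycle n by simp
  also have "\<dots> = real (n - 2) * y (n - 1, 1)"
    using superdiag by simp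
  finally have "y (n - 1, 1) = 0" using n by simp
  with superdiag[of 1] n show ?thesis by (simp add: numeral_2_eq_2)
qed

lemma derangement_conj:
  assumes "derangement n \<pi>" "g permutes {1..n}"
  shows "derangement n (g \<circ> \<pi> \<circ> inv g)"
  unfolding derangement_def
proof
  show "g \<circ> \<pi> \<circ> inv g permutes {1..n}"
    using assms by (intro permutes_compose permutes_inv) (auto simp: derangement_def)
  show "\<forall>i\<in>{1..n}. (g \<circ> \<pi> \<circ> inv g) i \<noteq> i"
  proof
    fix i assume "i \<in> {1..n}"
    then have "inv g i \<in> {1..n}" using permutes_in_image[OF permutes_inv[OF assms(2)]] by blast
    then have "\<pi> (inv g i) \<noteq> inv g i" using assms(1) by (auto simp: derangement_def)
    then show "(g \<circ> \<pi> \<circ> inv g) i \<noteq> i"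
      using permutes_inverses[OF assms(2)] by (metis comp_apply)
  qed
qed

lemma Hmul_conj:
  assumes g: "g permutes {1..n-1}"
  shows "Hmul n y (g \<circ> \<pi> \<circ> inv g) = Hmul n (\<lambda>(i, j). y (g i, g j)) \<pi>"
proof -
  have bij: "bij_betw (map_prod g g) (cols n) (cols n)"
    unfolding cols_def using permutes_imp_bij[OF g] by (intro bij_betw_map_prod)
  have "Hmul n y (g \<circ> \<pi> \<circ> inv g)
      = (\<Sum>p\<in>cols n. Hmat (g \<circ> \<pi> \<circ> inv g) (map_prod g g p) * y (map_prod g g p))"
    unfolding Hmul_def by (rule sum.reindex_bij_betw[OF bij, symmetric])
  also have "\<dots> = Hmul n (\<lambda>(i, j). y (g i, g j)) \<pi>"
    unfolding Hmul_def
  proof (intro sum.cong refl)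
    fix p :: "nat \<times> nat"
    have "(g (\<pi> (inv g (g (fst p)))) = g (snd p)) = (\<pi> (fst p) = snd p)"
      using permutes_inverses[OF g] permutes_inj[OF g] by (metis injD)
    then show "Hmat (g \<circ> \<pi> \<circ> inv g) (map_prod g g p) * y (map_prod g g p)
        = Hmat \<pi> p * (\<lambda>(i, j). y (g i, g j)) p"
      by (cases p) (simp add: Hmat_def)
  qed
  finally show ?thesis .
qed

lemma derangement_kernel_relabel:
  assumes hyp: "\<forall>\<pi>. derangement n \<pi> \<longrightarrow> Hmul n y \<pi> = 0"
    and g: "g permutes {1..n-1}"
  shows "\<forall>\<pi>. derangement n \<pi> \<longrightarrow> Hmul n (\<lambda>(i, j). y (g i, g j)) \<pi> = 0"
proof (intro allI impI)
  fix \<pi> assume "derangement n \<pi>"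
  moreover have "g permutes {1..n}" by (rule permutes_subset[OF g]) auto
  ultimately have "derangement n (g \<circ> \<pi> \<circ> inv g)" by (rule derangement_conj)
  then show "Hmul n (\<lambda>(i, j). y (g i, g j)) \<pi> = 0"
    using hyp Hmul_conj[OF g, of y \<pi>] by simp
qed

lemma derangement_kernel_offdiagonal:
  fixes y :: "nat \<times> nat \<Rightarrow> real"
  assumes n: "n \<ge> 2"
    and hyp: "\<forall>\<pi>. derangement n \<pi> \<longrightarrow> Hmul n y \<pi> = 0"
    and a: "a \<in> {1..n-1}" and b: "b \<in> {1..n-1}" and ab: "a \<noteq> b"
  shows "y (a, b) = 0"
proof (cases "n = 2")
  case True
  then show ?thesis using a b ab by auto
next
  case False
  then have n3: "n \<ge> 3" using n by simp
  have one: "(1::nat) \<in> {1..n-1}" and two: "(2::nat) \<in> {1..n-1}" using n3 by auto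
  text \<open>A permutation of {1..n-1} sending 1 to a and 2 to b.\<close>
  define g where "g = transpose (transpose 1 a 2) b \<circ> transpose 1 a"
  have "transpose 1 a 2 \<in> {1..n-1}"
    using two permutes_in_image[OF permutes_swap_id[OF one a]] by blast
  then have g: "g permutes {1..n-1}"
    unfolding g_def by (intro permutes_compose permutes_swap_id one a b)
  have "g 1 = a" "g 2 = b" using ab by (auto simp: g_def transpose_def)
  with derangement_kernel_entry_1_2[OF n3 derangement_kernel_relabel[OF hyp g]]
  show ?thesis by simp
qed

theorem lemma11:
  fixes n :: nat and y :: "nat \<times> nat \<Rightarrow> real"
  assumes "n \<ge> 2"
    and "\<forall>\<pi>. derangement n \<pi> \<longrightarrow> Hmul n y \<pi> = 0"
  shows "\<exists>c :: nat \<Rightarrow> real. \<forall>\<pi>. \<pi> permutes {1..n} \<longrightarrow>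
           Hmul n y \<pi> = (\<Sum>i\<in>{1..n-1}. Hmat \<pi> (i, i) * c i)"
proof (intro exI allI impI)
  fix \<pi> :: "nat \<Rightarrow> nat"
  show "Hmul n y \<pi> = (\<Sum>i\<in>{1..n-1}. Hmat \<pi> (i, i) * y (i, i))"
    unfolding Hmul_as_row_sum
  proof (rule sum.cong[OF refl])
    fix i assume "i \<in> {1..n-1}"
    then show "(if \<pi> i \<in> {1..n-1} then y (i, \<pi> i) else 0) = Hmat \<pi> (i, i) * y (i, i)"
      using derangement_kernel_offdiagonal[OF assms, of i "\<pi> i"] by (auto simp: Hmat_def)
  qed
qed

end
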